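(* Consider the variation of the temporal graph discovery game on temporal multigraphs. For all $\delta,k\in\mathbb N^+$ and $T_{\max}\ge 4$, there is an infinite family of temporal graphs $\{\mathcal G_n\}_{n\in\mathbb N}$ such that $\mathcal G_n$ has $\Theta(n)$ nodes and the minimum number of rounds required to win the game grows in $\Omega\big(n(T_{\max}-3)/(\delta k)\big)$. Also, all graphs in the family are temporally connected.
   Context: A temporal multigraph $\mathcal G=(V,E,\lambda)$ with lifetime $T_{\max}$ has a finite multiset $E$ of undirected edges (parallel edges allowed) and a labeling $\lambda:E\to\{1,\dots,T_{\max}\}$, no two parallel edges having the same label; edge $e$ is present only at time $\lambda(e)$. An ordinary temporal graph is the special case without parallel edges. A temporal path is a path with strictly increasing labels; $\mathcal G$ is temporally connected if every node reaches every other by a temporal path. Infection model with parameter $\delta$: a set $S\subseteq V\times[0,T_{\max}]$ of at most $k$ seed infections; a seed $(u,t)$ makes $u$ infected at time $t$; otherwise a susceptible node $u$ becomes infected at time $t$ iff some neighbour $v$ infectious at time $t$ has an edge $uv$ with label $t$ (exactly one infector recorded if several exist). A node infected at time $t$ is infectious at times $t+1,\dots,t+\delta$ and resistant afterwards. The infection log records which node infected which at what time. Game: the Discoverer knows $V$ and the static multigraph; each round it submits at most $k$ seeds and the Adversary answers with a consistent infection log under some labeling consistent with all previous answers (adaptive); the Discoverer wins iff its finally submitted labeling equals the Adversary's final labeling consistent with all logs. *)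

theory Defs
  imports Main "HOL-Library.Extended_Nat"
begin

text \<open>
A temporal multigraph on node type 'v is represented by its node set V and a
function Lab assigning to every unordered pair {u,v} the set of labels of the
(parallel) edges between u and v.  Since no two parallel edges carry the same
label, the multiset of labelled edges between u and v is exactly this set, and
the number of parallel edges between u and v is card (Lab {u,v}).  (Parallel
edges are interchangeable, so two labellings are equal iff they assign the same
label sets to all node pairs.)  Edges are present only at their label time.
\<close>

type_synonym 'v labeling = "'v set \<Rightarrow> nat set"
type_synonym 'v tgraph = "'v set \<times> 'v labeling"

definition nodes :: "'v tgraph \<Rightarrow> 'v set" where
  "nodes G = fst G"

definition labs :: "'v tgraph \<Rightarrow> 'v labeling" where
  "labs G = snd G"

definition is_labeling :: "nat \<Rightarrow> 'v set \<Rightarrow> 'v labeling \<Rightarrow> bool" where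
  "is_labeling Tmax V lam \<longleftrightarrow>
     (\<forall>p. lam p \<subseteq> {1..Tmax}) \<and>
     (\<forall>p. lam p \<noteq> {} \<longrightarrow> p \<subseteq> V \<and> card p = 2)"

definition temporal_multigraph :: "nat \<Rightarrow> 'v tgraph \<Rightarrow> bool" where
  "temporal_multigraph Tmax G \<longleftrightarrow> finite (nodes G) \<and> is_labeling Tmax (nodes G) (labs G)"

definition static_mult :: "'v labeling \<Rightarrow> 'v set \<Rightarrow> nat" where
  "static_mult lam p = card (lam p)"

definition labelings_of :: "nat \<Rightarrow> 'v set \<Rightarrow> ('v set \<Rightarrow> nat) \<Rightarrow> 'v labeling set" where
  "labelings_of Tmax V m = {lam. is_labeling Tmax V lam \<and> static_mult lam = m}"

definition temporal_path :: "'v labeling \<Rightarrow> 'v list \<Rightarrow> nat list \<Rightarrow> bool" where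
  "temporal_path lam vs ts \<longleftrightarrow>
     vs \<noteq> [] \<and> distinct vs \<and> length ts + 1 = length vs \<and>
     (\<forall>i < length ts. ts ! i \<in> lam {vs ! i, vs ! Suc i}) \<and>
     sorted_wrt (<) ts"

definition temporally_reaches :: "'v tgraph \<Rightarrow> 'v \<Rightarrow> 'v \<Rightarrow> bool" where
  "temporally_reaches G u w \<longleftrightarrow>
     (\<exists>vs ts. temporal_path (labs G) vs ts \<and> hd vs = u \<and> last vs = w)"

definition temporally_connected :: "'v tgraph \<Rightarrow> bool" where
  "temporally_connected G \<longleftrightarrow>
     (\<forall>u \<in> nodes G. \<forall>w \<in> nodes G. temporally_reaches G u w)"

text \<open>Infection process.  inf_state lam delta S t u = Some s iff node u has been
infected at time s \<le> t (None: still susceptible after time t).\<close>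
fun inf_state :: "'v labeling \<Rightarrow> nat \<Rightarrow> ('v \<times> nat) set \<Rightarrow> nat \<Rightarrow> 'v \<Rightarrow> nat option" where
  "inf_state lam delta S 0 = (\<lambda>u. if (u, 0) \<in> S then Some 0 else None)"
| "inf_state lam delta S (Suc t) = (\<lambda>u.
     case inf_state lam delta S t u of
       Some s \<Rightarrow> Some s
     | None \<Rightarrow>
         (if (u, Suc t) \<in> S \<or>
             (\<exists>v. Suc t \<in> lam {u, v} \<and>
                  (case inf_state lam delta S t v of
                     Some s \<Rightarrow> s < Suc t \<and> Suc t \<le> s + delta
                   | None \<Rightarrow> False))
          then Some (Suc t) else None))"

definition infectious_at :: "'v labeling \<Rightarrow> nat \<Rightarrow> ('v \<times> nat) set \<Rightarrow> 'v \<Rightarrow> nat \<Rightarrow> bool" where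
  "infectious_at lam delta S v t \<longleftrightarrow>
     (\<exists>s. inf_state lam delta S t v = Some s \<and> s + 1 \<le> t \<and> t \<le> s + delta)"

text \<open>Infection log: a set of triples (v, u, t) meaning "v infected u at time t".
Seeded infections are not recorded as transmissions (the Discoverer knows the
seeds); every node infected by transmission gets exactly one recorded infector,
which must be a valid one.\<close>
definition valid_log :: "nat \<Rightarrow> 'v labeling \<Rightarrow> nat \<Rightarrow> ('v \<times> nat) set
                          \<Rightarrow> ('v \<times> 'v \<times> nat) set \<Rightarrow> bool" where
  "valid_log Tmax lam delta S Lg \<longleftrightarrow>
     (\<forall>(v, u, t) \<in> Lg. inf_state lam delta S Tmax u = Some t \<and> (u, t) \<notin> S \<and>
                        t \<in> lam {u, v} \<and> infectious_at lam delta S v t) \<and>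
     (\<forall>u t. inf_state lam delta S Tmax u = Some t \<and> (u, t) \<notin> S \<longrightarrow>
            (\<exists>!v. (v, u, t) \<in> Lg))"

text \<open>The Discoverer's knowledge is the set L of labellings consistent
with all logs so far.  can_win r L: the Discoverer has a strategy that, against
every (adaptive) Adversary, wins using at most r further rounds, i.e. forces the
set of consistent labellings down to a single one (only then is its final
submitted labelling guaranteed to equal the Adversary's final labelling).\<close>
fun can_win :: "nat \<Rightarrow> nat \<Rightarrow> nat \<Rightarrow> 'v set \<Rightarrow> nat \<Rightarrow> 'v labeling set \<Rightarrow> bool" where
  "can_win Tmax delta k V 0 L = (\<exists>lam. L \<subseteq> {lam})"
| "can_win Tmax delta k V (Suc r) L =
     ((\<exists>lam. L \<subseteq> {lam}) \<or>
      (\<exists>S. S \<subseteq> V \<times> {0..Tmax} \<and> card S \<le> k \<and>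
         (\<forall>lam \<in> L. \<forall>Lg. valid_log Tmax lam delta S Lg \<longrightarrow>
             can_win Tmax delta k V r {lam' \<in> L. valid_log Tmax lam' delta S Lg})))"

definition min_rounds :: "nat \<Rightarrow> nat \<Rightarrow> nat \<Rightarrow> 'v tgraph \<Rightarrow> enat" where
  "min_rounds Tmax delta k G =
     (let L0 = labelings_of Tmax (nodes G) (static_mult (labs G)) in
      if \<exists>r. can_win Tmax delta k (nodes G) r L0
      then enat (LEAST r. can_win Tmax delta k (nodes G) r L0)
      else \<infinity>)"

end

theory Submission
  imports Defs
begin

text \<open>The graph G_n has a hub 0 joined by edges labelled 1 and Tmax to 2n further nodes,
  grouped into n pairs; the two nodes of pair i are joined by Tmax - 1 parallel edges carrying
  every label in 1..Tmax except a hidden label x_i in 2..Tmax-1.  The hub edges make G_n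
  temporally connected and never interfere with the hidden labels.

  A seed at a node of pair i at time t can only reveal whether t + 1 = x_i: if two labellings
  differ only in hidden labels that no seed probes, their infection processes coincide and every
  log of one is a log of the other.  So if the Adversary always answers with the log of some
  surviving candidate, a round of k seeds lowers the ambiguity \<Sum>i (|X_i| - 1) of the candidate
  sets X_i for the hidden labels by at most k.  The initial ambiguity is n (Tmax - 3), so at least
  n (Tmax - 3) / k rounds are needed, whatever delta is.\<close>

context
  fixes lam :: "'v labeling" and d :: nat and S :: "('v \<times> nat) set"
begin

lemma inf_state_le: "inf_state lam d S t u = Some s \<Longrightarrow> s \<le> t"
  by (induction t arbitrary: s) (auto split: option.splits if_splits)

lemma inf_state_mono:
  assumes "inf_state lam d S t u = Some s" and "t \<le> t'"
  shows "inf_state lam d S t' u = Some s"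
  using assms(2,1) by (induction rule: dec_induct) simp_all

lemma inf_state_at_infection_time:
  "inf_state lam d S t u = Some s \<Longrightarrow> inf_state lam d S s u = Some s"
proof (induction t)
  case (Suc t)
  show ?case
  proof (cases "inf_state lam d S t u")
    case None
    with Suc.prems have "s = Suc t" by (simp split: if_splits)
    with Suc.prems show ?thesis by blast
  qed (use Suc in simp)
qed (simp split: if_splits)

lemma inf_state_restrict:
  assumes "inf_state lam d S t' u = Some s" and "t \<le> t'"
  shows "inf_state lam d S t u = (if s \<le> t then Some s else None)"
proof (cases "inf_state lam d S t u")
  case None
  then show ?thesis
    using inf_state_mono[OF inf_state_at_infection_time[OF assms(1)], of t] by auto
next
  case (Some s')
  then show ?thesis
    using inf_state_mono[OF Some assms(2)] assms(1) inf_state_le[OF Some] by simp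
qed

lemma infectious_at_Suc:
  "infectious_at lam d S v (Suc t) \<longleftrightarrow> (\<exists>s. inf_state lam d S t v = Some s \<and> Suc t \<le> s + d)"
proof
  assume "infectious_at lam d S v (Suc t)"
  then obtain s where "inf_state lam d S (Suc t) v = Some s" "s \<le> t" "Suc t \<le> s + d"
    unfolding infectious_at_def by auto
  with inf_state_restrict[of "Suc t" v s t] show "\<exists>s. inf_state lam d S t v = Some s \<and> Suc t \<le> s + d"
    by auto
next
  assume "\<exists>s. inf_state lam d S t v = Some s \<and> Suc t \<le> s + d"
  then show "infectious_at lam d S v (Suc t)"
    unfolding infectious_at_def using inf_state_mono[of t v _ "Suc t"] inf_state_le[of t v] by fastforce
qed

lemma inf_state_Suc_None:
  assumes "inf_state lam d S t u = None"
  shows "inf_state lam d S (Suc t) u =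
    (if (u, Suc t) \<in> S \<or> (\<exists>v. Suc t \<in> lam {u, v} \<and> infectious_at lam d S v (Suc t))
     then Some (Suc t) else None)"
proof -
  have "(case inf_state lam d S t v of Some s \<Rightarrow> s < Suc t \<and> Suc t \<le> s + d | None \<Rightarrow> False)
        \<longleftrightarrow> infectious_at lam d S v (Suc t)" for v
    by (auto simp: infectious_at_Suc less_Suc_eq_le dest: inf_state_le split: option.splits)
  then show ?thesis using assms by simp
qed

lemma susceptible_not_exposed:
  assumes "inf_state lam d S t u = None" and "t \<in> lam {u, v}"
  shows "\<not> infectious_at lam d S v t"
proof (cases t)
  case 0
  then show ?thesis by (simp add: infectious_at_def)
next
  case (Suc t')
  have "inf_state lam d S t' u = None"
    using inf_state_mono[of t' u _ t] assms(1) Suc by (cases "inf_state lam d S t' u") auto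
  then show ?thesis
    using inf_state_Suc_None[of t' u] assms Suc by (auto split: if_splits)
qed

lemma transmission_time:
  assumes "inf_state lam d S T u = Some t" and "(u, t) \<notin> S"
  obtains t' where "t = Suc t'" and "inf_state lam d S t' u = None"
proof -
  have at_t: "inf_state lam d S t u = Some t"
    using inf_state_at_infection_time[OF assms(1)] .
  with assms(2) obtain t' where t': "t = Suc t'"
    by (cases t) (auto split: if_splits)
  moreover have "inf_state lam d S t' u = None"
    using inf_state_restrict[OF at_t, of t'] t' by simp
  ultimately show ?thesis by (rule that)
qed

lemma transmission_has_infector:
  assumes "inf_state lam d S T u = Some t" and "(u, t) \<notin> S"
  shows "\<exists>v. t \<in> lam {u, v} \<and> infectious_at lam d S v t"
proof -
  obtain t' where t': "t = Suc t'" and "inf_state lam d S t' u = None"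
    using transmission_time[OF assms] .
  from inf_state_Suc_None[OF this(2)] inf_state_at_infection_time[OF assms(1)] assms(2) t'
  show ?thesis by (metis option.distinct(1))
qed

lemma valid_log_exists: "\<exists>Lg. valid_log T lam d S Lg"
proof -
  let ?infector = "\<lambda>u t. SOME v. t \<in> lam {u, v} \<and> infectious_at lam d S v t"
  let ?Lg = "{(v, u, t). inf_state lam d S T u = Some t \<and> (u, t) \<notin> S \<and> v = ?infector u t}"
  have "valid_log T lam d S ?Lg"
    unfolding valid_log_def using someI_ex[OF transmission_has_infector] by auto
  then show ?thesis by blast
qed

end

definition pair :: "nat \<Rightarrow> nat set" where
  "pair i = {2 * i + 1, 2 * i + 2}"

definition star_of_pairs :: "nat \<Rightarrow> nat \<Rightarrow> (nat \<Rightarrow> nat) \<Rightarrow> nat labeling" where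
  "star_of_pairs n Tm x p =
     {t. (\<exists>j \<in> {1..2 * n}. p = {0, j}) \<and> (t = 1 \<or> t = Tm)} \<union>
     {t. \<exists>i < n. p = pair i \<and> t \<in> {1..Tm} \<and> t \<noteq> x i}"

lemma pair_eq_iff: "pair i = pair j \<longleftrightarrow> i = j"
  by (auto simp: pair_def doubleton_eq_iff)

lemma doubleton_eq_pair_iff: "{u, v} = pair i \<longleftrightarrow> u \<in> pair i \<and> v \<in> pair i \<and> u \<noteq> v"
  by (auto simp: pair_def doubleton_eq_iff)

lemma pair_subset_nodes: "i < n \<Longrightarrow> pair i \<subseteq> {1..2 * n}"
  by (auto simp: pair_def)

lemma star_of_pairs_pair: "i < n \<Longrightarrow> star_of_pairs n Tm x (pair i) = {1..Tm} - {x i}"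
  unfolding star_of_pairs_def by (auto simp: pair_eq_iff) (auto simp: pair_def)

lemma star_of_pairs_hub:
  assumes "j \<in> {1..2 * n}"
  shows "star_of_pairs n Tm x {0, j} = {1, Tm}" and "star_of_pairs n Tm x {j, 0} = {1, Tm}"
proof -
  show "star_of_pairs n Tm x {0, j} = {1, Tm}"
    using assms unfolding star_of_pairs_def by (auto simp: pair_def doubleton_eq_iff)
  then show "star_of_pairs n Tm x {j, 0} = {1, Tm}"
    by (simp add: insert_commute)
qed

lemma star_of_pairs_differ:
  assumes "star_of_pairs n Tm x p \<noteq> star_of_pairs n Tm y p"
  obtains i where "i < n" "p = pair i" "x i \<noteq> y i"
proof -
  have "\<exists>i<n. p = pair i \<and> x i \<noteq> y i"
  proof (rule ccontr)
    assume "\<not> ?thesis"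
    then have "star_of_pairs n Tm x p = star_of_pairs n Tm y p"
      unfolding star_of_pairs_def by auto
    with assms show False ..
  qed
  then show ?thesis using that by blast
qed

lemma star_of_pairs_edge_at_pair:
  assumes "i < n" "v \<in> pair i" "t \<in> star_of_pairs n Tm x {v, w}"
  shows "w = 0 \<or> {v, w} = pair i"
proof -
  from assms(3) consider (hub) j where "{v, w} = {0, j}" | (pair) i' where "{v, w} = pair i'"
    unfolding star_of_pairs_def by blast
  then show ?thesis
  proof cases
    case hub
    then show ?thesis using assms(2) by (auto simp: pair_def doubleton_eq_iff)
  next
    case pair
    then have "v \<in> pair i'" "w \<in> pair i'" by (auto simp: doubleton_eq_pair_iff)
    with assms(2) have "i' = i" by (auto simp: pair_def)
    with pair show ?thesis by simp
  qed
qed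

lemma star_of_pairs_is_labeling: "1 \<le> Tm \<Longrightarrow> is_labeling Tm {0..2 * n} (star_of_pairs n Tm x)"
  unfolding is_labeling_def star_of_pairs_def pair_def by auto

lemma static_mult_star_of_pairs:
  assumes "\<forall>i<n. x i \<in> {1..Tm}" "\<forall>i<n. y i \<in> {1..Tm}"
  shows "static_mult (star_of_pairs n Tm x) = static_mult (star_of_pairs n Tm y)"
proof
  fix p
  show "static_mult (star_of_pairs n Tm x) p = static_mult (star_of_pairs n Tm y) p"
  proof (cases "star_of_pairs n Tm x p = star_of_pairs n Tm y p")
    case False
    then obtain i where "i < n" "p = pair i" by (rule star_of_pairs_differ)
    then show ?thesis
      using assms by (simp add: static_mult_def star_of_pairs_pair)
  qed (simp add: static_mult_def)
qed

lemma star_of_pairs_temporally_connected: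
  assumes "2 \<le> Tm"
  shows "temporally_connected ({0..2 * n}, star_of_pairs n Tm x)"
  unfolding temporally_connected_def temporally_reaches_def nodes_def labs_def fst_conv snd_conv
proof (intro ballI)
  fix u w :: nat
  assume u: "u \<in> {0..2 * n}" and w: "w \<in> {0..2 * n}"
  let ?L = "star_of_pairs n Tm x"
  have "temporal_path ?L [u] []" by (simp add: temporal_path_def)
  moreover have "temporal_path ?L [0, w] [1]" if "w \<noteq> 0"
    using that w star_of_pairs_hub(1)[of w n Tm x] by (simp add: temporal_path_def)
  moreover have "temporal_path ?L [u, 0] [1]" if "u \<noteq> 0"
    using that u star_of_pairs_hub(2)[of u n Tm x] by (simp add: temporal_path_def)
  moreover have "temporal_path ?L [u, 0, w] [1, Tm]" if "u \<noteq> 0" "w \<noteq> 0" "u \<noteq> w"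
    using that u w assms star_of_pairs_hub[of _ n Tm x]
    by (auto simp: temporal_path_def less_Suc_eq nth_Cons')
  ultimately show "\<exists>vs ts. temporal_path ?L vs ts \<and> hd vs = u \<and> last vs = w"
    by (metis last.simps list.sel(1) list.distinct(1))
qed

definition probed :: "(nat \<times> nat) set \<Rightarrow> nat \<Rightarrow> nat set" where
  "probed S i = (\<lambda>(v, t). Suc t) ` (S \<inter> (pair i \<times> UNIV))"

definition probe_equiv :: "nat \<Rightarrow> nat \<Rightarrow> (nat \<times> nat) set \<Rightarrow> (nat \<Rightarrow> nat) \<Rightarrow> (nat \<Rightarrow> nat) \<Rightarrow> bool" where
  "probe_equiv n Tm S x y \<longleftrightarrow>
     (\<forall>i<n. x i \<in> {2..<Tm} \<and> y i \<in> {2..<Tm} \<and>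
            (x i \<noteq> y i \<longrightarrow> x i \<notin> probed S i \<and> y i \<notin> probed S i))"

lemma probe_equiv_sym: "probe_equiv n Tm S x y \<Longrightarrow> probe_equiv n Tm S y x"
  unfolding probe_equiv_def by metis

lemma missing_label_probed:
  fixes n Tm :: nat and y :: "nat \<Rightarrow> nat"
  defines "L \<equiv> star_of_pairs n Tm y"
  assumes i: "i < n" and uv: "{u, v} = pair i"
    and u: "inf_state L d S t u = None"
    and v: "infectious_at L d S v (Suc t)"
    and hidden: "y i = Suc t" "y i \<in> {2..<Tm}"
  shows "y i \<in> probed S i"
proof -
  have in_pair: "u \<in> pair i" "v \<in> pair i" using uv by (auto simp: doubleton_eq_pair_iff)
  have nodes: "u \<in> {1..2 * n}" "v \<in> {1..2 * n}" using in_pair pair_subset_nodes[OF i] by auto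
  obtain s where s: "inf_state L d S t v = Some s" "Suc t \<le> s + d"
    using v by (auto simp: infectious_at_Suc)
  txt \<open>Infected before t, v would have infected u at time t over the pair edge labelled t.\<close>
  have "s = t"
  proof (rule ccontr)
    assume "s \<noteq> t"
    with inf_state_le[OF s(1)] s have "infectious_at L d S v t"
      by (auto simp: infectious_at_def)
    moreover have "t \<in> L {u, v}"
      using hidden star_of_pairs_pair[OF i] uv by (auto simp: L_def)
    ultimately show False using susceptible_not_exposed[OF u] by blast
  qed
  txt \<open>Nor can u (still susceptible) or the hub (only at time 1, infecting u as well) have
    infected v at time t.\<close>
  have "(v, t) \<in> S"
  proof (rule ccontr)
    assume "(v, t) \<notin> S"
    then obtain w where w: "t \<in> L {v, w}" "infectious_at L d S w t"
      using transmission_has_infector[OF s(1)[unfolded \<open>s = t\<close>]] by blast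
    from star_of_pairs_edge_at_pair[OF i in_pair(2) w(1)[unfolded L_def]]
    consider "w = 0" | "{v, w} = pair i" by blast
    then show False
    proof cases
      case 1
      with w(1) nodes(2) hidden have "t = 1"
        by (auto simp: L_def star_of_pairs_hub)
      with 1 nodes(1) have "t \<in> L {u, w}" by (simp add: L_def star_of_pairs_hub)
      with w(2) susceptible_not_exposed[OF u] show False by blast
    next
      case 2
      with uv have "w = u"
        by (metis doubleton_eq_iff)
      with w(2) u show False by (simp add: infectious_at_def)
    qed
  qed
  with in_pair(2) hidden(1) show ?thesis
    unfolding probed_def by (auto intro!: image_eqI[of _ _ "(v, t)"])
qed

lemma label_transfer:
  assumes equiv: "probe_equiv n Tm S x y"
    and u: "inf_state (star_of_pairs n Tm y) d S t u = None"
    and label: "Suc t \<in> star_of_pairs n Tm x {u, v}"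
    and v: "infectious_at (star_of_pairs n Tm y) d S v (Suc t)"
  shows "Suc t \<in> star_of_pairs n Tm y {u, v}"
proof (cases "star_of_pairs n Tm x {u, v} = star_of_pairs n Tm y {u, v}")
  case False
  then obtain i where i: "i < n" "{u, v} = pair i" "x i \<noteq> y i"
    by (rule star_of_pairs_differ)
  with equiv have hidden: "y i \<in> {2..<Tm}" "y i \<notin> probed S i"
    unfolding probe_equiv_def by auto
  have "Suc t \<noteq> y i"
    using missing_label_probed[OF i(1,2) u v _ hidden(1)] hidden(2) by auto
  with label show ?thesis
    using star_of_pairs_pair[OF i(1)] i(2) by auto
qed (use label in simp)

lemma inf_state_probe_equiv:
  assumes "probe_equiv n Tm S x y"
  shows "inf_state (star_of_pairs n Tm x) d S t = inf_state (star_of_pairs n Tm y) d S t"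
proof (induction t)
  case (Suc t)
  let ?Lx = "star_of_pairs n Tm x" and ?Ly = "star_of_pairs n Tm y"
  have infectious_eq: "infectious_at ?Lx d S v (Suc t) = infectious_at ?Ly d S v (Suc t)" for v
    using Suc.IH by (simp add: infectious_at_Suc)
  show ?case
  proof
    fix u
    show "inf_state ?Lx d S (Suc t) u = inf_state ?Ly d S (Suc t) u"
    proof (cases "inf_state ?Ly d S t u")
      case None
      moreover from None Suc.IH have "inf_state ?Lx d S t u = None" by simp
      moreover have "(\<exists>v. Suc t \<in> ?Lx {u, v} \<and> infectious_at ?Ly d S v (Suc t)) \<longleftrightarrow>
                     (\<exists>v. Suc t \<in> ?Ly {u, v} \<and> infectious_at ?Ly d S v (Suc t))"
        using label_transfer[OF assms None] label_transfer[OF probe_equiv_sym[OF assms]]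
          calculation(2) infectious_eq by metis
      ultimately show ?thesis
        by (simp add: inf_state_Suc_None infectious_eq del: inf_state.simps)
    qed (use Suc.IH in simp)
  qed
qed simp

lemma valid_log_probe_equiv:
  assumes equiv: "probe_equiv n Tm S x y" and log: "valid_log Tm (star_of_pairs n Tm x) d S Lg"
  shows "valid_log Tm (star_of_pairs n Tm y) d S Lg"
proof -
  let ?Lx = "star_of_pairs n Tm x" and ?Ly = "star_of_pairs n Tm y"
  have state_eq: "inf_state ?Lx d S = inf_state ?Ly d S"
    using inf_state_probe_equiv[OF equiv] by blast
  then have infectious_eq: "infectious_at ?Lx d S = infectious_at ?Ly d S"
    by (simp add: infectious_at_def fun_eq_iff)
  have "t \<in> ?Ly {u, v}" if "(v, u, t) \<in> Lg" for v u t
  proof -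
    from log that have infected: "inf_state ?Ly d S Tm u = Some t" "(u, t) \<notin> S"
      and label: "t \<in> ?Lx {u, v}" and v: "infectious_at ?Ly d S v t"
      unfolding valid_log_def state_eq infectious_eq by auto
    obtain t' where t': "t = Suc t'" and u: "inf_state ?Ly d S t' u = None"
      using transmission_time[OF infected] .
    from label_transfer[OF equiv u label[unfolded t'] v[unfolded t']] t' show ?thesis by simp
  qed
  with log show ?thesis
    unfolding valid_log_def state_eq infectious_eq by fastforce
qed

definition candidates :: "nat \<Rightarrow> nat \<Rightarrow> (nat \<Rightarrow> nat set) \<Rightarrow> nat labeling set" where
  "candidates n Tm X = {star_of_pairs n Tm x | x. \<forall>i<n. x i \<in> X i}"

definition ambiguity :: "nat \<Rightarrow> (nat \<Rightarrow> nat set) \<Rightarrow> nat" where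
  "ambiguity n X = (\<Sum>i<n. card (X i) - 1)"

lemma ambiguity_eq_0_if_unique:
  assumes X: "\<forall>i<n. X i \<noteq> {} \<and> X i \<subseteq> {2..<Tm}" and unique: "candidates n Tm X \<subseteq> {lam}"
  shows "ambiguity n X = 0"
proof -
  define x0 where "x0 j = (SOME a. a \<in> X j)" for j
  have x0: "x0 j \<in> X j" if "j < n" for j
    using X that unfolding x0_def by (simp add: some_in_eq)
  have "card (X i) \<le> 1" if i: "i < n" for i
  proof -
    have candidate: "star_of_pairs n Tm (x0(i := c)) \<in> candidates n Tm X" if "c \<in> X i" for c
      unfolding candidates_def using x0 that by (intro CollectI exI[of _ "x0(i := c)"]) auto
    have "a = b" if ab: "a \<in> X i" "b \<in> X i" for a b
    proof -
      have "star_of_pairs n Tm (x0(i := a)) = star_of_pairs n Tm (x0(i := b))"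
        using candidate[OF ab(1)] candidate[OF ab(2)] unique by blast
      then have "{1..Tm} - {a} = {1..Tm} - {b}"
        using star_of_pairs_pair[OF i, of Tm "x0(i := a)"] star_of_pairs_pair[OF i, of Tm "x0(i := b)"]
        by simp
      moreover have "X i \<subseteq> {1..Tm}" using X i by fastforce
      ultimately show "a = b" using ab by blast
    qed
    moreover have "finite (X i)" using X i finite_subset by blast
    ultimately show ?thesis by (simp add: card_le_Suc0_iff_eq)
  qed
  then show ?thesis by (simp add: ambiguity_def)
qed

lemma sum_card_probed_le:
  assumes "finite S"
  shows "(\<Sum>i<n. card (probed S i)) \<le> card S"
proof -
  let ?S = "\<lambda>i. S \<inter> (pair i \<times> UNIV)"
  have "(\<Sum>i<n. card (probed S i)) \<le> (\<Sum>i<n. card (?S i))"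
    unfolding probed_def by (intro sum_mono card_image_le) (simp add: assms)
  also have "\<dots> = card (\<Union>i<n. ?S i)"
    by (rule card_UN_disjoint[symmetric]) (auto simp: assms pair_def)
  also have "\<dots> \<le> card S"
    by (rule card_mono[OF assms]) auto
  finally show ?thesis .
qed

lemma subset_avoiding_or_singleton:
  assumes "finite A" "A \<noteq> {}" "finite P"
  obtains B where "B \<noteq> {}" "B \<subseteq> A" "card A - 1 \<le> card B - 1 + card P" "B \<inter> P = {} \<or> card B = 1"
proof (cases "A \<subseteq> P")
  case True
  obtain a where "a \<in> A" using assms(2) by blast
  moreover have "card A \<le> card P" using True assms(3) by (rule card_mono[rotated])
  ultimately show ?thesis by (intro that[of "{a}"]) auto
next
  case False
  have "card A \<le> card ((A - P) \<union> P)"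
    using assms by (intro card_mono) auto
  also have "\<dots> \<le> card (A - P) + card P"
    by (rule card_Un_le)
  finally have "card A \<le> card (A - P) + card P" .
  with False assms(1) show ?thesis by (intro that[of "A - P"]) auto
qed

lemma probe_refinement:
  assumes X: "\<forall>i<n. X i \<noteq> {} \<and> X i \<subseteq> {2..<Tm}" and S: "finite S"
  obtains X' where "\<forall>i<n. X' i \<noteq> {} \<and> X' i \<subseteq> X i"
    and "ambiguity n X \<le> ambiguity n X' + card S"
    and "\<And>x y. \<forall>i<n. x i \<in> X' i \<and> y i \<in> X' i \<Longrightarrow> probe_equiv n Tm S x y"
proof -
  have finite_probed: "finite (probed S i)" for i
    using S by (simp add: probed_def)
  have "\<exists>B. B \<noteq> {} \<and> B \<subseteq> X i \<and> card (X i) - 1 \<le> card B - 1 + card (probed S i) \<and>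
             (B \<inter> probed S i = {} \<or> card B = 1)" if "i < n" for i
  proof -
    from X that have "finite (X i)" "X i \<noteq> {}"
      by (auto intro: finite_subset[of _ "{2..<Tm}"])
    from subset_avoiding_or_singleton[OF this finite_probed] show ?thesis by metis
  qed
  then obtain X' where X': "\<And>i. i < n \<Longrightarrow> X' i \<noteq> {} \<and> X' i \<subseteq> X i \<and>
                card (X i) - 1 \<le> card (X' i) - 1 + card (probed S i) \<and>
                (X' i \<inter> probed S i = {} \<or> card (X' i) = 1)"
    by metis
  have "ambiguity n X \<le> (\<Sum>i<n. (card (X' i) - 1) + card (probed S i))"
    unfolding ambiguity_def using X' by (intro sum_mono) simp
  also have "\<dots> \<le> ambiguity n X' + card S"
    using sum_card_probed_le[OF S, of n] by (simp add: ambiguity_def sum.distrib)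
  finally have ambiguity: "ambiguity n X \<le> ambiguity n X' + card S" .
  have equiv: "probe_equiv n Tm S x y" if "\<forall>i<n. x i \<in> X' i \<and> y i \<in> X' i" for x y
    unfolding probe_equiv_def
  proof (intro allI impI conjI)
    fix i assume i: "i < n"
    with that X' X show "x i \<in> {2..<Tm}" "y i \<in> {2..<Tm}" by blast+
    assume "x i \<noteq> y i"
    with that i have "card (X' i) \<noteq> 1" by (auto simp: card_Suc_eq)
    with X'[OF i] that i show "x i \<notin> probed S i" "y i \<notin> probed S i" by blast+
  qed
  from X' have "\<forall>i<n. X' i \<noteq> {} \<and> X' i \<subseteq> X i" by blast
  from that[OF this ambiguity equiv] show ?thesis .
qed

lemma not_can_win:
  assumes V: "finite V" and "\<forall>i<n. X i \<noteq> {} \<and> X i \<subseteq> {2..<Tm}"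
    and "candidates n Tm X \<subseteq> L" and "r * k < ambiguity n X"
  shows "\<not> can_win Tm d k V r L"
  using assms(2-)
proof (induction r arbitrary: X L)
  case 0
  then show ?case
    using ambiguity_eq_0_if_unique by (metis can_win.simps(1) dual_order.trans not_less_zero)
next
  case (Suc r)
  have not_unique: "\<not> (\<exists>lam. L \<subseteq> {lam})"
    using Suc.prems ambiguity_eq_0_if_unique by (metis dual_order.trans not_less_zero)
  have "\<exists>lam \<in> L. \<exists>Lg. valid_log Tm lam d S Lg \<and>
          \<not> can_win Tm d k V r {lam' \<in> L. valid_log Tm lam' d S Lg}"
    if S: "S \<subseteq> V \<times> {0..Tm}" "card S \<le> k" for S
  proof -
    have "finite S" using S(1) V finite_subset by blast
    obtain X' where X': "\<forall>i<n. X' i \<noteq> {} \<and> X' i \<subseteq> X i"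
      and ambiguity: "ambiguity n X \<le> ambiguity n X' + card S"
      and equiv: "\<And>x y. \<forall>i<n. x i \<in> X' i \<and> y i \<in> X' i \<Longrightarrow> probe_equiv n Tm S x y"
      using probe_refinement[OF Suc.prems(1) \<open>finite S\<close>] by blast
    have sub: "candidates n Tm X' \<subseteq> L"
      using X' Suc.prems(2) unfolding candidates_def by blast
    define x0 where "x0 i = (SOME a. a \<in> X' i)" for i
    have x0: "\<forall>i<n. x0 i \<in> X' i"
      using X' unfolding x0_def by (simp add: some_in_eq)
    obtain Lg where Lg: "valid_log Tm (star_of_pairs n Tm x0) d S Lg"
      using valid_log_exists by blast
    have "candidates n Tm X' \<subseteq> {lam \<in> L. valid_log Tm lam d S Lg}"
      using sub valid_log_probe_equiv[OF equiv Lg] x0 unfolding candidates_def by blast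
    moreover have "r * k < ambiguity n X'"
      using Suc.prems(3) ambiguity S(2) by simp
    moreover have "\<forall>i<n. X' i \<noteq> {} \<and> X' i \<subseteq> {2..<Tm}"
      using X' Suc.prems(1) by blast
    ultimately have "\<not> can_win Tm d k V r {lam \<in> L. valid_log Tm lam d S Lg}"
      using Suc.IH by blast
    moreover have "star_of_pairs n Tm x0 \<in> L"
      using sub x0 unfolding candidates_def by blast
    ultimately show ?thesis using Lg by blast
  qed
  with not_unique show ?case by auto
qed

definition star_of_pairs_graph :: "nat \<Rightarrow> nat \<Rightarrow> nat tgraph" where
  "star_of_pairs_graph Tm n = ({0..2 * n}, star_of_pairs n Tm (\<lambda>_. 2))"

lemma temporal_multigraph_star_of_pairs_graph:
  "1 \<le> Tm \<Longrightarrow> temporal_multigraph Tm (star_of_pairs_graph Tm n)"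
  using star_of_pairs_is_labeling
  by (simp add: star_of_pairs_graph_def temporal_multigraph_def nodes_def labs_def)

lemma temporally_connected_star_of_pairs_graph:
  "2 \<le> Tm \<Longrightarrow> temporally_connected (star_of_pairs_graph Tm n)"
  unfolding star_of_pairs_graph_def by (rule star_of_pairs_temporally_connected)

lemma card_nodes_star_of_pairs_graph: "card (nodes (star_of_pairs_graph Tm n)) = 2 * n + 1"
  by (simp add: star_of_pairs_graph_def nodes_def)

lemma card_nodes_star_of_pairs_graph_linear:
  "\<exists>c1 > 0. \<exists>c2 > 0. \<exists>n0. \<forall>n \<ge> n0.
     c1 * real n \<le> real (card (nodes (star_of_pairs_graph Tm n))) \<and>
     real (card (nodes (star_of_pairs_graph Tm n))) \<le> c2 * real n"
proof -
  have "\<forall>n \<ge> 1. 1 * real n \<le> real (card (nodes (star_of_pairs_graph Tm n))) \<and>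
                 real (card (nodes (star_of_pairs_graph Tm n))) \<le> 3 * real n"
    by (simp add: card_nodes_star_of_pairs_graph)
  moreover have "(0::real) < 1" "(0::real) < 3" by simp_all
  ultimately show ?thesis by blast
qed

lemma min_rounds_star_of_pairs_graph:
  assumes Tm: "4 \<le> Tm" and r: "r * k < n * (Tm - 3)"
  shows "enat r < min_rounds Tm d k (star_of_pairs_graph Tm n)"
proof -
  let ?V = "{0..2 * n}"
  define L0 where "L0 = labelings_of Tm ?V (static_mult (star_of_pairs n Tm (\<lambda>_. 2)))"
  let ?X = "\<lambda>i::nat. {2..<Tm}"
  have "candidates n Tm ?X \<subseteq> L0"
  proof
    fix lam
    assume "lam \<in> candidates n Tm ?X"
    then obtain x where x: "lam = star_of_pairs n Tm x" "\<forall>i<n. x i \<in> {2..<Tm}"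
      unfolding candidates_def by blast
    have "static_mult lam = static_mult (star_of_pairs n Tm (\<lambda>_. 2))"
      unfolding x(1) using x(2) Tm by (intro static_mult_star_of_pairs) auto
    with x(1) Tm star_of_pairs_is_labeling show "lam \<in> L0"
      unfolding L0_def labelings_of_def by simp
  qed
  moreover have "ambiguity n ?X = n * (Tm - 3)"
    by (simp add: ambiguity_def)
  moreover have "\<forall>i<n. ?X i \<noteq> {} \<and> ?X i \<subseteq> {2..<Tm}"
    using Tm by simp
  ultimately have lost: "\<not> can_win Tm d k ?V r' L0" if "r' \<le> r" for r'
    using not_can_win[of ?V n ?X Tm] le_less_trans[OF mult_le_mono1[OF that] r] by simp
  show ?thesis
  proof (cases "\<exists>r. can_win Tm d k ?V r L0")
    case True
    then have "can_win Tm d k ?V (LEAST r. can_win Tm d k ?V r L0) L0"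
      by (rule LeastI_ex)
    with lost have "r < (LEAST r. can_win Tm d k ?V r L0)"
      using not_less by blast
    with True show ?thesis
      by (simp add: min_rounds_def star_of_pairs_graph_def nodes_def labs_def L0_def)
  qed (simp add: min_rounds_def star_of_pairs_graph_def nodes_def labs_def L0_def)
qed

theorem mainTheorem19:
  "\<exists>c > 0. \<forall>(delta::nat) (k::nat) (Tmax::nat).
     delta \<ge> 1 \<longrightarrow> k \<ge> 1 \<longrightarrow> Tmax \<ge> 4 \<longrightarrow>
     (\<exists>G :: nat \<Rightarrow> nat tgraph.
        (\<forall>n. temporal_multigraph Tmax (G n) \<and> temporally_connected (G n)) \<and>
        (\<exists>c1 > 0. \<exists>c2 > 0. \<exists>n0. \<forall>n \<ge> n0.
            c1 * real n \<le> real (card (nodes (G n))) \<and>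
            real (card (nodes (G n))) \<le> c2 * real n) \<and>
        (\<exists>n0. \<forall>n \<ge> n0. \<forall>r::nat.
            real r < c * real n * (real Tmax - 3) / (real delta * real k) \<longrightarrow>
            enat r < min_rounds Tmax delta k (G n)))"
proof -
  have rounds: "enat r < min_rounds Tm d k (star_of_pairs_graph Tm n)"
    if "1 \<le> d" "1 \<le> k" "4 \<le> Tm" "real r < 1 * real n * (real Tm - 3) / (real d * real k)"
    for d k Tm n r :: nat
  proof -
    have "real (r * (d * k)) < real (n * (Tm - 3))"
      using that by (simp add: pos_less_divide_eq of_nat_diff)
    moreover have "r * k \<le> r * (d * k)"
      using that(1) by simp
    ultimately have "r * k < n * (Tm - 3)"
      by linarith
    with that(3) show ?thesis by (rule min_rounds_star_of_pairs_graph)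
  qed
  have graphs: "temporal_multigraph Tm (star_of_pairs_graph Tm n) \<and>
                temporally_connected (star_of_pairs_graph Tm n)" if "4 \<le> Tm" for Tm n
    using that temporal_multigraph_star_of_pairs_graph temporally_connected_star_of_pairs_graph
    by simp
  show ?thesis
    apply (intro exI[of _ "1::real"] conjI zero_less_one allI impI)
    subgoal for delta k Tmax
      using graphs[of Tmax] card_nodes_star_of_pairs_graph_linear[of Tmax] rounds[of delta k Tmax]
      by (intro exI[of _ "star_of_pairs_graph Tmax"] conjI) auto
    done
qed

end
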